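(* Consider a family of metrics on real projective 3-space $RP^3$ (with size tending to infinity), and qudits of dimension $d\ge2$ placed equally spaced along a projective line $RP^1\subset RP^3$. The shift QCA on this $RP^1$ (mapping each operator at a site to the corresponding operator at the next site along the circle $RP^1$) cannot be realized by a finite depth quantum circuit.
   Context: A finite depth quantum circuit (fdqc) is a unitary obtained as the product of a bounded number of layers, each layer a product of unitaries (gates) on disjoint sets of bounded diameter, with the bounds on depth and gate diameter uniform along the family; it realizes a QCA by conjugation $O\mapsto U^\dagger O U$. A QCA is a $*$-automorphism of the operator algebra of the tensor product of the local Hilbert spaces which maps operators supported at a point to operators supported within a bounded distance of that point. *)

theory Defs
  imports "HOL-Analysis.Analysis"
begin

text \<open>A point of RP^3 is represented by a unit vector of R^4 (up to sign).
The round (Fubini--Study) metric on RP^3 = S^3/{+-1}, scaled by the size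
parameter L, gives the distance  L * arccos |x . y|.\<close>

definition rp3_dist :: "real \<Rightarrow> real^4 \<Rightarrow> real^4 \<Rightarrow> real" where
  "rp3_dist L x y = L * arccos \<bar>x \<bullet> y\<bar>"

text \<open>The projective line RP^1 = P(span(e1,e2)) inside RP^3; the k-th of N
equally spaced sites along it.\<close>

definition site :: "nat \<Rightarrow> nat \<Rightarrow> real^4" where
  "site N k = vector [cos (pi * real k / real N), sin (pi * real k / real N), 0, 0]"

text \<open>Basis configurations of the Hilbert space (C^d)^{\<otimes> N}: functions
assigning a level < d to each site < N (and 0 elsewhere).  Operators are
matrices indexed by configurations; only their entries on configurations matter.\<close>

definition cfgs :: "nat \<Rightarrow> nat \<Rightarrow> (nat \<Rightarrow> nat) set" where
  "cfgs N d = {c. (\<forall>i<N. c i < d) \<and> (\<forall>i\<ge>N. c i = 0)}"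

type_synonym op = "(nat \<Rightarrow> nat) \<Rightarrow> (nat \<Rightarrow> nat) \<Rightarrow> complex"

definition op_mul :: "nat \<Rightarrow> nat \<Rightarrow> op \<Rightarrow> op \<Rightarrow> op" where
  "op_mul N d A B = (\<lambda>c c'. \<Sum>b\<in>cfgs N d. A c b * B b c')"

definition op_id :: op where
  "op_id = (\<lambda>c c'. if c = c' then 1 else 0)"

definition op_adj :: "op \<Rightarrow> op" where
  "op_adj A = (\<lambda>c c'. cnj (A c' c))"

definition op_eq :: "nat \<Rightarrow> nat \<Rightarrow> op \<Rightarrow> op \<Rightarrow> bool" where
  "op_eq N d A B \<longleftrightarrow> (\<forall>c\<in>cfgs N d. \<forall>c'\<in>cfgs N d. A c c' = B c c')"

definition op_unitary :: "nat \<Rightarrow> nat \<Rightarrow> op \<Rightarrow> bool" where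
  "op_unitary N d U \<longleftrightarrow>
     op_eq N d (op_mul N d U (op_adj U)) op_id \<and> op_eq N d (op_mul N d (op_adj U) U) op_id"

text \<open>X is supported on the set of sites S: X = A tensor id on the complement of S.\<close>

definition supported_on :: "nat \<Rightarrow> nat \<Rightarrow> nat set \<Rightarrow> op \<Rightarrow> bool" where
  "supported_on N d S X \<longleftrightarrow> (\<exists>A. \<forall>c\<in>cfgs N d. \<forall>c'\<in>cfgs N d.
     X c c' = (if (\<forall>i\<in>{..<N} - S. c i = c' i)
               then A (\<lambda>i. if i \<in> S then c i else 0) (\<lambda>i. if i \<in> S then c' i else 0)
               else 0))"

definition shift_site :: "nat \<Rightarrow> nat \<Rightarrow> nat" where
  "shift_site N i = (if i < N then (i + 1) mod N else i)"

text \<open>The shift automorphism: an operator acting at site i is mapped to the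
same operator acting at site i+1 (mod N).\<close>

definition shift_qca :: "nat \<Rightarrow> op \<Rightarrow> op" where
  "shift_qca N X = (\<lambda>c c'. X (c \<circ> shift_site N) (c' \<circ> shift_site N))"

definition op_prod :: "nat \<Rightarrow> nat \<Rightarrow> op list \<Rightarrow> op" where
  "op_prod N d Us = foldr (op_mul N d) Us op_id"

definition valid_gate :: "real \<Rightarrow> nat \<Rightarrow> nat \<Rightarrow> real \<Rightarrow> nat set \<times> op \<Rightarrow> bool" where
  "valid_gate L N d R g \<longleftrightarrow>
     fst g \<subseteq> {..<N} \<and> op_unitary N d (snd g) \<and> supported_on N d (fst g) (snd g) \<and>
     (\<forall>i\<in>fst g. \<forall>j\<in>fst g. rp3_dist L (site N i) (site N j) \<le> R)"

definition valid_layer :: "real \<Rightarrow> nat \<Rightarrow> nat \<Rightarrow> real \<Rightarrow> (nat set \<times> op) list \<Rightarrow> bool" where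
  "valid_layer L N d R lay \<longleftrightarrow>
     (\<forall>g\<in>set lay. valid_gate L N d R g) \<and>
     (\<forall>a<length lay. \<forall>b<length lay. a \<noteq> b \<longrightarrow> fst (lay ! a) \<inter> fst (lay ! b) = {})"

definition circuit_unitary :: "nat \<Rightarrow> nat \<Rightarrow> (nat set \<times> op) list list \<Rightarrow> op" where
  "circuit_unitary N d layers = op_prod N d (map (\<lambda>lay. op_prod N d (map snd lay)) layers)"

definition fdqc_realizes ::
  "real \<Rightarrow> nat \<Rightarrow> nat \<Rightarrow> nat \<Rightarrow> real \<Rightarrow> (op \<Rightarrow> op) \<Rightarrow> bool" where
  "fdqc_realizes L N d D R alpha \<longleftrightarrow>
     (\<exists>layers. length layers \<le> D \<and> (\<forall>lay\<in>set layers. valid_layer L N d R lay) \<and>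
        (\<forall>X. op_eq N d (alpha X)
               (op_mul N d (op_adj (circuit_unitary N d layers))
                  (op_mul N d X (circuit_unitary N d layers)))))"

end

(*
  Gates of bounded diameter in RP^3 of size L act on at most r ~ R N / (pi L) consecutive
  sites of the circle RP^1, so for large L the circuit has depth D with D r much smaller than N.
  Drop the gates straddling the cut between sites N - 1 and 0. The cut-open circuit V still maps
  the matrix units on a window [a, c) to those on [a + 1, c + 1), as the shift does, since the
  light cone of the window never reaches the cut; and it conjugates the projection onto |0> on
  [c, N) into an operator Y on [c - D r, N) = [a + 1, N). Y commutes with all matrix units on
  [a + 1, c + 1), hence is supported on [c + 1, N). A nonzero projection there has trace at
  least d^(c+1), but Y has the trace d^c of the original projection.
*)

theory Submission
  imports Defs
begin

section \<open>Distances between the sites\<close>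

definition nat_dist :: "nat \<Rightarrow> nat \<Rightarrow> nat" where
  "nat_dist i j = (if i \<le> j then j - i else i - j)"

definition ring_dist :: "nat \<Rightarrow> nat \<Rightarrow> nat \<Rightarrow> nat" where
  "ring_dist N i j = min (nat_dist i j) (N - nat_dist i j)"

lemma nat_dist_le_iff: "nat_dist i j \<le> r \<longleftrightarrow> i \<le> j + r \<and> j \<le> i + r"
  unfolding nat_dist_def by auto

lemma inner_site: "site N i \<bullet> site N j = cos (pi * real i / real N - pi * real j / real N)"
  unfolding site_def inner_vec_def sum_4 vector_def by (simp add: cos_diff)

lemma arccos_abs_cos_pi_frac:
  assumes "k \<le> N" "0 < N"
  shows "arccos \<bar>cos (pi * real k / real N)\<bar> = pi * real (min k (N - k)) / real N"
proof (cases "2 * k \<le> N")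
  case True
  have small: "pi * real k / real N \<le> pi / 2"
    using True assms by (simp add: field_simps)
  then have "0 \<le> cos (pi * real k / real N)"
    using pi_gt_zero by (intro cos_ge_zero) (auto intro: order.trans[of _ 0])
  moreover have "arccos (cos (pi * real k / real N)) = pi * real k / real N"
    using small pi_gt_zero by (intro arccos_cos; simp; linarith)
  ultimately show ?thesis
    using True by simp
next
  case False
  have flip: "pi * real (N - k) / real N = pi - pi * real k / real N"
    using assms by (simp add: of_nat_diff field_simps)
  have small: "pi * real (N - k) / real N \<le> pi / 2"
    using False assms by (simp add: of_nat_diff field_simps)
  then have "0 \<le> cos (pi * real (N - k) / real N)"
    using pi_gt_zero by (intro cos_ge_zero) (auto intro: order.trans[of _ 0])
  moreover have "cos (pi * real (N - k) / real N) = - cos (pi * real k / real N)"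
    unfolding flip by simp
  ultimately have "\<bar>cos (pi * real k / real N)\<bar> = cos (pi * real (N - k) / real N)"
    by linarith
  moreover have "arccos (cos (pi * real (N - k) / real N)) = pi * real (N - k) / real N"
    using small pi_gt_zero by (intro arccos_cos; simp; linarith)
  ultimately show ?thesis
    using False by simp
qed

lemma rp3_dist_site:
  assumes "i < N" "j < N"
  shows "rp3_dist L (site N i) (site N j) = L * pi * real (ring_dist N i j) / real N"
proof -
  have "\<bar>cos (pi * real i / real N - pi * real j / real N)\<bar> = \<bar>cos (pi * real (nat_dist i j) / real N)\<bar>"
  proof (cases "i \<le> j")
    case True
    then have "pi * real i / real N - pi * real j / real N = - (pi * real (nat_dist i j) / real N)"
      by (simp add: nat_dist_def of_nat_diff diff_divide_distrib right_diff_distrib)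
    then show ?thesis by (simp only: cos_minus)
  next
    case False
    then show ?thesis by (simp add: nat_dist_def of_nat_diff diff_divide_distrib right_diff_distrib)
  qed
  moreover have "nat_dist i j \<le> N"
    using assms by (auto simp: nat_dist_def)
  ultimately show ?thesis
    using assms arccos_abs_cos_pi_frac[of "nat_dist i j" N]
    unfolding rp3_dist_def inner_site ring_dist_def by simp
qed

lemma valid_gate_ring_dist:
  assumes "valid_gate L N d R g" "0 < L" "i \<in> fst g" "j \<in> fst g"
  shows "real (ring_dist N i j) \<le> R * real N / (pi * L)"
proof -
  have "i < N" "j < N"
    using assms unfolding valid_gate_def by auto
  moreover have "rp3_dist L (site N i) (site N j) \<le> R"
    using assms unfolding valid_gate_def by auto
  ultimately have "L * pi * real (ring_dist N i j) / real N \<le> R"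
    by (simp add: rp3_dist_site)
  then show ?thesis
    using assms(2) \<open>i < N\<close> pi_gt_zero by (simp add: field_simps)
qed

definition configs :: "nat \<Rightarrow> nat set \<Rightarrow> (nat \<Rightarrow> nat) set" where
  "configs d S = {c. (\<forall>i\<in>S. c i < d) \<and> (\<forall>i. i \<notin> S \<longrightarrow> c i = 0)}"

definition restrict_cfg :: "nat set \<Rightarrow> (nat \<Rightarrow> nat) \<Rightarrow> nat \<Rightarrow> nat" where
  "restrict_cfg S c = (\<lambda>i. if i \<in> S then c i else 0)"

definition merge_cfg :: "nat set \<Rightarrow> (nat \<Rightarrow> nat) \<Rightarrow> (nat \<Rightarrow> nat) \<Rightarrow> nat \<Rightarrow> nat" where
  "merge_cfg S s t = (\<lambda>i. if i \<in> S then s i else t i)"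

definition agree_off :: "nat \<Rightarrow> nat set \<Rightarrow> (nat \<Rightarrow> nat) \<Rightarrow> (nat \<Rightarrow> nat) \<Rightarrow> bool" where
  "agree_off N S a b \<longleftrightarrow> (\<forall>i\<in>{..<N} - S. a i = b i)"

lemma cfgs_eq_configs: "cfgs N d = configs d {..<N}"
  unfolding cfgs_def configs_def by auto

lemma configs_insert:
  assumes "a \<notin> S"
  shows "configs d (insert a S) = (\<lambda>(v, c). c(a := v)) ` ({..<d} \<times> configs d S)"
proof (intro set_eqI iffI)
  fix c assume c: "c \<in> configs d (insert a S)"
  have "c = (\<lambda>(v, c). c(a := v)) (c a, c(a := 0))" by auto
  moreover have "(c a, c(a := 0)) \<in> {..<d} \<times> configs d S"
    using c assms unfolding configs_def by auto
  ultimately show "c \<in> (\<lambda>(v, c). c(a := v)) ` ({..<d} \<times> configs d S)" by blast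
qed (auto simp: configs_def)

lemma finite_card_configs:
  assumes "finite S"
  shows "finite (configs d S) \<and> card (configs d S) = d ^ card S"
  using assms
proof (induction S rule: finite_induct)
  case empty
  have "configs d {} = {\<lambda>_. 0}"
    unfolding configs_def by auto
  then show ?case by simp
next
  case (insert a S)
  have "inj_on (\<lambda>(v, c). c(a := v)) ({..<d} \<times> configs d S)"
  proof (rule inj_onI, clarify)
    fix v c v' c' assume c: "c \<in> configs d S" "c' \<in> configs d S" and eq: "c(a := v) = c'(a := v')"
    have "c a = c' a"
      using c insert.hyps(2) unfolding configs_def by auto
    then have "c = c'"
      using eq by (metis fun_upd_triv fun_upd_upd)
    then show "v = v' \<and> c = c'"
      using eq by (metis fun_upd_eqD)
  qed
  then show ?case
    unfolding configs_insert[OF insert.hyps(2)]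
    using insert by (simp add: card_image card_cartesian_product)
qed

lemma finite_configs: "finite S \<Longrightarrow> finite (configs d S)"
  using finite_card_configs by blast

lemma card_configs: "finite S \<Longrightarrow> card (configs d S) = d ^ card S"
  using finite_card_configs by blast

lemma finite_cfgs: "finite (cfgs N d)"
  unfolding cfgs_eq_configs by (simp add: finite_configs)

lemma restrict_cfg_configs: "S \<subseteq> {..<N} \<Longrightarrow> c \<in> cfgs N d \<Longrightarrow> restrict_cfg S c \<in> configs d S"
  unfolding restrict_cfg_def configs_def cfgs_def by auto

lemma merge_cfg_cfgs:
  "s \<in> configs d S \<Longrightarrow> S \<subseteq> {..<N} \<Longrightarrow> a \<in> cfgs N d \<Longrightarrow> merge_cfg S s a \<in> cfgs N d"
  unfolding configs_def cfgs_def merge_cfg_def by auto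

lemma restrict_merge_cfg: "s \<in> configs d S \<Longrightarrow> restrict_cfg S (merge_cfg S s a) = s"
  unfolding configs_def restrict_cfg_def merge_cfg_def by (auto intro!: ext)

lemma merge_restrict_cfg: "merge_cfg S (restrict_cfg S b) b = b"
  unfolding merge_cfg_def restrict_cfg_def by auto

lemma agree_off_merge_cfg: "agree_off N S (merge_cfg S s a) b \<longleftrightarrow> agree_off N S a b"
  unfolding agree_off_def merge_cfg_def by auto

lemma agree_off_sym: "agree_off N S a b \<longleftrightarrow> agree_off N S b a"
  unfolding agree_off_def by auto

lemma bij_betw_merge_cfg:
  assumes "S \<subseteq> U"
  shows "bij_betw (\<lambda>(s, t). merge_cfg S s t) (configs d S \<times> configs d (U - S)) (configs d U)"
proof (rule bij_betw_byWitness[where f' = "\<lambda>e. (restrict_cfg S e, restrict_cfg (U - S) e)"])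
qed (use assms in \<open>auto simp: configs_def restrict_cfg_def merge_cfg_def intro!: ext\<close>)

lemma sum_cfgs_split:
  assumes "S \<subseteq> {..<N}"
  shows "(\<Sum>e\<in>cfgs N d. f e) =
    (\<Sum>s\<in>configs d S. \<Sum>t\<in>configs d ({..<N} - S). f (merge_cfg S s t))"
proof -
  have "(\<Sum>e\<in>cfgs N d. f e) =
      (\<Sum>p\<in>configs d S \<times> configs d ({..<N} - S). f ((\<lambda>(s, t). merge_cfg S s t) p))"
    unfolding cfgs_eq_configs
    using sum.reindex_bij_betw[OF bij_betw_merge_cfg[OF assms], of f d] by simp
  also have "\<dots> = (\<Sum>s\<in>configs d S. \<Sum>t\<in>configs d ({..<N} - S). f (merge_cfg S s t))"
    by (simp add: sum.cartesian_product case_prod_unfold)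
  finally show ?thesis .
qed

lemma bij_betw_merge_cfg_agree_off:
  assumes "S \<subseteq> {..<N}" "a \<in> cfgs N d"
  shows "bij_betw (\<lambda>s. merge_cfg S s a) (configs d S) {e \<in> cfgs N d. agree_off N S a e}"
proof (rule bij_betw_byWitness[where f' = "restrict_cfg S"])
  show "\<forall>e\<in>{e \<in> cfgs N d. agree_off N S a e}. merge_cfg S (restrict_cfg S e) a = e"
    using assms unfolding cfgs_def agree_off_def restrict_cfg_def merge_cfg_def
    by (auto intro!: ext) (metis Diff_iff lessThan_iff not_less)
qed (use assms in \<open>auto simp: configs_def cfgs_def agree_off_def restrict_cfg_def merge_cfg_def
  intro!: ext\<close>)

lemma sum_cfgs_agree_off:
  assumes "S \<subseteq> {..<N}" "a \<in> cfgs N d"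
  shows "(\<Sum>e\<in>cfgs N d. if agree_off N S a e then h e else 0) = (\<Sum>s\<in>configs d S. h (merge_cfg S s a))"
proof -
  have "(\<Sum>e\<in>cfgs N d. if agree_off N S a e then h e else 0) = (\<Sum>e\<in>{e \<in> cfgs N d. agree_off N S a e}. h e)"
    by (simp add: sum.inter_filter finite_cfgs)
  also have "\<dots> = (\<Sum>s\<in>configs d S. h (merge_cfg S s a))"
    using sum.reindex_bij_betw[OF bij_betw_merge_cfg_agree_off[OF assms], of h] by simp
  finally show ?thesis .
qed

lemma sum_eq_single:
  assumes "finite A" "x \<in> A" "\<And>y. y \<in> A \<Longrightarrow> y \<noteq> x \<Longrightarrow> f y = 0"
  shows "sum f A = f x"
proof -
  have "sum f A = sum f {x}"
    using assms by (intro sum.mono_neutral_right) auto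
  then show ?thesis by simp
qed

lemma op_eq_refl: "op_eq N d A A"
  unfolding op_eq_def by simp

lemma op_eq_sym: "op_eq N d A B \<Longrightarrow> op_eq N d B A"
  unfolding op_eq_def by simp

lemma op_eq_trans [trans]: "op_eq N d A B \<Longrightarrow> op_eq N d B C \<Longrightarrow> op_eq N d A C"
  unfolding op_eq_def by simp

lemma eq_op_eq_trans [trans]: "A = B \<Longrightarrow> op_eq N d B C \<Longrightarrow> op_eq N d A C"
  by simp

lemma op_eq_eq_trans [trans]: "op_eq N d A B \<Longrightarrow> B = C \<Longrightarrow> op_eq N d A C"
  by simp

lemma op_mul_assoc: "op_mul N d (op_mul N d A B) C = op_mul N d A (op_mul N d B C)"
  unfolding op_mul_def
  by (auto intro!: ext simp: sum_distrib_left sum_distrib_right mult.assoc intro: sum.swap)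

lemma op_adj_mul: "op_adj (op_mul N d A B) = op_mul N d (op_adj B) (op_adj A)"
  unfolding op_mul_def op_adj_def by (auto intro!: ext simp: mult.commute)

lemma op_adj_adj: "op_adj (op_adj A) = A"
  unfolding op_adj_def by simp

lemma op_adj_id: "op_adj op_id = op_id"
  unfolding op_adj_def op_id_def by (auto intro!: ext)

lemma op_mul_cong:
  "op_eq N d A A' \<Longrightarrow> op_eq N d B B' \<Longrightarrow> op_eq N d (op_mul N d A B) (op_mul N d A' B')"
  unfolding op_eq_def op_mul_def by (auto intro!: sum.cong)

lemma op_mul_id_left: "op_eq N d (op_mul N d op_id A) A"
  unfolding op_eq_def op_mul_def op_id_def
  by (simp add: if_distrib[of "\<lambda>x. x * _"] finite_cfgs cong: if_cong)

lemma op_mul_id_right: "op_eq N d (op_mul N d A op_id) A"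
  unfolding op_eq_def op_mul_def op_id_def
  by (simp add: if_distrib[of "\<lambda>x. _ * x"] finite_cfgs cong: if_cong)

lemma op_unitary_mul:
  assumes "op_unitary N d A" "op_unitary N d B"
  shows "op_unitary N d (op_mul N d A B)"
proof -
  have "op_eq N d (op_mul N d (op_mul N d A B) (op_adj (op_mul N d A B)))
        (op_mul N d A (op_mul N d (op_mul N d B (op_adj B)) (op_adj A)))"
    unfolding op_adj_mul op_mul_assoc by (rule op_eq_refl)
  also have "op_eq N d \<dots> (op_mul N d A (op_mul N d op_id (op_adj A)))"
    using assms unfolding op_unitary_def by (intro op_mul_cong op_eq_refl) auto
  also have "op_eq N d \<dots> (op_mul N d A (op_adj A))"
    by (intro op_mul_cong op_eq_refl op_mul_id_left)
  also have "op_eq N d \<dots> op_id"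
    using assms unfolding op_unitary_def by auto
  finally have right: "op_eq N d (op_mul N d (op_mul N d A B) (op_adj (op_mul N d A B))) op_id" .
  have "op_eq N d (op_mul N d (op_adj (op_mul N d A B)) (op_mul N d A B))
        (op_mul N d (op_adj B) (op_mul N d (op_mul N d (op_adj A) A) B))"
    unfolding op_adj_mul op_mul_assoc by (rule op_eq_refl)
  also have "op_eq N d \<dots> (op_mul N d (op_adj B) (op_mul N d op_id B))"
    using assms unfolding op_unitary_def by (intro op_mul_cong op_eq_refl) auto
  also have "op_eq N d \<dots> (op_mul N d (op_adj B) B)"
    by (intro op_mul_cong op_eq_refl op_mul_id_left)
  also have "op_eq N d \<dots> op_id"
    using assms unfolding op_unitary_def by auto
  finally show ?thesis
    using right unfolding op_unitary_def by simp
qed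

lemma op_unitary_id: "op_unitary N d op_id"
  unfolding op_unitary_def op_adj_id using op_mul_id_left by blast

lemma op_unitary_prod: "\<forall>U\<in>set Us. op_unitary N d U \<Longrightarrow> op_unitary N d (op_prod N d Us)"
  by (induction Us) (auto simp: op_prod_def op_unitary_id op_unitary_mul)

definition op_conj :: "nat \<Rightarrow> nat \<Rightarrow> op \<Rightarrow> op \<Rightarrow> op" where
  "op_conj N d U X = op_mul N d (op_adj U) (op_mul N d X U)"

lemma op_conj_cong: "op_eq N d X X' \<Longrightarrow> op_eq N d (op_conj N d U X) (op_conj N d U X')"
  unfolding op_conj_def by (intro op_mul_cong op_eq_refl)

lemma op_conj_mul: "op_conj N d (op_mul N d U V) X = op_conj N d V (op_conj N d U X)"
  unfolding op_conj_def op_adj_mul op_mul_assoc ..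

lemma op_conj_id: "op_eq N d (op_conj N d op_id X) X"
proof -
  have "op_eq N d (op_conj N d op_id X) (op_mul N d op_id X)"
    unfolding op_conj_def op_adj_id by (intro op_mul_cong op_eq_refl op_mul_id_right)
  also have "op_eq N d \<dots> X" by (rule op_mul_id_left)
  finally show ?thesis .
qed

lemma op_adj_conj: "op_adj (op_conj N d U X) = op_conj N d U (op_adj X)"
  unfolding op_conj_def op_adj_mul op_adj_adj op_mul_assoc ..

lemma op_conj_op_mul:
  assumes "op_unitary N d U"
  shows "op_eq N d (op_mul N d (op_conj N d U X) (op_conj N d U Y)) (op_conj N d U (op_mul N d X Y))"
proof -
  have "op_mul N d (op_conj N d U X) (op_conj N d U Y) =
    op_mul N d (op_adj U) (op_mul N d X (op_mul N d (op_mul N d U (op_adj U)) (op_mul N d Y U)))"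
    unfolding op_conj_def by (simp add: op_mul_assoc)
  also have "op_eq N d \<dots> (op_mul N d (op_adj U) (op_mul N d X (op_mul N d op_id (op_mul N d Y U))))"
    using assms unfolding op_unitary_def by (intro op_mul_cong op_eq_refl) auto
  also have "op_eq N d \<dots> (op_mul N d (op_adj U) (op_mul N d X (op_mul N d Y U)))"
    by (intro op_mul_cong op_eq_refl op_mul_id_left)
  also have "\<dots> = op_conj N d U (op_mul N d X Y)"
    unfolding op_conj_def by (simp add: op_mul_assoc)
  finally show ?thesis .
qed

section \<open>Supports\<close>

lemma supported_on_iff:
  "supported_on N d S X \<longleftrightarrow> (\<exists>A. \<forall>c\<in>cfgs N d. \<forall>c'\<in>cfgs N d.
     X c c' = (if agree_off N S c c' then A (restrict_cfg S c) (restrict_cfg S c') else 0))"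
  unfolding supported_on_def agree_off_def restrict_cfg_def by simp

lemma supported_onE:
  assumes "supported_on N d S X"
  obtains A where "\<And>c c'. c \<in> cfgs N d \<Longrightarrow> c' \<in> cfgs N d \<Longrightarrow>
     X c c' = (if agree_off N S c c' then A (restrict_cfg S c) (restrict_cfg S c') else 0)"
  using assms unfolding supported_on_iff by blast

lemma supported_on_cong: "op_eq N d X X' \<Longrightarrow> supported_on N d S X \<Longrightarrow> supported_on N d S X'"
  unfolding supported_on_iff op_eq_def by metis

lemma supported_on_inter_lessThan:
  "supported_on N d (S \<inter> {..<N}) X \<longleftrightarrow> supported_on N d S X"
proof -
  have "agree_off N (S \<inter> {..<N}) = agree_off N S"
    unfolding agree_off_def by (intro ext) auto
  moreover have "restrict_cfg (S \<inter> {..<N}) c = restrict_cfg S c" if "c \<in> cfgs N d" for c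
    using that unfolding restrict_cfg_def cfgs_def by auto
  ultimately show ?thesis
    unfolding supported_on_iff by (simp cong: ball_cong)
qed

lemma supported_on_mono:
  assumes "supported_on N d S X" "S \<subseteq> S'"
  shows "supported_on N d S' X"
proof -
  obtain A where A: "\<And>c c'. c \<in> cfgs N d \<Longrightarrow> c' \<in> cfgs N d \<Longrightarrow>
     X c c' = (if agree_off N S c c' then A (restrict_cfg S c) (restrict_cfg S c') else 0)"
    using supported_onE[OF assms(1)] by blast
  have "agree_off N S c c' \<longleftrightarrow>
      agree_off N S' c c' \<and> (\<forall>i\<in>S' - S. restrict_cfg S' c i = restrict_cfg S' c' i)"
    if "c \<in> cfgs N d" "c' \<in> cfgs N d" for c c'
  proof -
    have "c i = c' i" if "i \<in> S' - S" "\<not> i < N" for i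
      using \<open>c \<in> cfgs N d\<close> \<open>c' \<in> cfgs N d\<close> that unfolding cfgs_def by auto
    then show ?thesis
      using assms(2) unfolding agree_off_def restrict_cfg_def by auto
  qed
  moreover have "restrict_cfg S (restrict_cfg S' c) = restrict_cfg S c" for c
    using assms(2) unfolding restrict_cfg_def by (auto intro!: ext)
  ultimately show ?thesis
    unfolding supported_on_iff
    by (intro exI[of _ "\<lambda>s s'. if \<forall>i\<in>S' - S. s i = s' i then A (restrict_cfg S s) (restrict_cfg S s') else 0"])
      (auto simp: A)
qed

lemma supported_on_mul:
  assumes "supported_on N d S X" "supported_on N d S Y"
  shows "supported_on N d S (op_mul N d X Y)"
proof -
  define S' where "S' = S \<inter> {..<N}"
  have S': "S' \<subseteq> {..<N}"
    unfolding S'_def by auto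
  have "supported_on N d S' X" "supported_on N d S' Y"
    using assms unfolding S'_def supported_on_inter_lessThan .
  obtain A where A: "\<And>c c'. c \<in> cfgs N d \<Longrightarrow> c' \<in> cfgs N d \<Longrightarrow>
     X c c' = (if agree_off N S' c c' then A (restrict_cfg S' c) (restrict_cfg S' c') else 0)"
    using supported_onE[OF \<open>supported_on N d S' X\<close>] by blast
  obtain B where B: "\<And>c c'. c \<in> cfgs N d \<Longrightarrow> c' \<in> cfgs N d \<Longrightarrow>
     Y c c' = (if agree_off N S' c c' then B (restrict_cfg S' c) (restrict_cfg S' c') else 0)"
    using supported_onE[OF \<open>supported_on N d S' Y\<close>] by blast
  have "op_mul N d X Y c c' = (if agree_off N S' c c'
      then (\<Sum>u\<in>configs d S'. A (restrict_cfg S' c) u * B u (restrict_cfg S' c')) else 0)"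
    if c: "c \<in> cfgs N d" "c' \<in> cfgs N d" for c c'
  proof -
    have "op_mul N d X Y c c' = (\<Sum>e\<in>cfgs N d. if agree_off N S' c e
        then A (restrict_cfg S' c) (restrict_cfg S' e) * Y e c' else 0)"
      unfolding op_mul_def using c by (intro sum.cong) (auto simp: A)
    also have "\<dots> = (\<Sum>u\<in>configs d S'.
        A (restrict_cfg S' c) (restrict_cfg S' (merge_cfg S' u c)) * Y (merge_cfg S' u c) c')"
      by (rule sum_cfgs_agree_off[OF S' c(1)])
    also have "\<dots> = (\<Sum>u\<in>configs d S'. if agree_off N S' c c'
        then A (restrict_cfg S' c) u * B u (restrict_cfg S' c') else 0)"
      using c S' by (intro sum.cong) (auto simp: B merge_cfg_cfgs restrict_merge_cfg agree_off_merge_cfg)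
    finally show ?thesis by simp
  qed
  then have "supported_on N d S' (op_mul N d X Y)"
    unfolding supported_on_iff
    by (intro exI[of _ "\<lambda>s s'. \<Sum>u\<in>configs d S'. A s u * B u s'"]) blast
  then show ?thesis
    unfolding S'_def supported_on_inter_lessThan .
qed

lemma supported_on_adj:
  assumes "supported_on N d S X"
  shows "supported_on N d S (op_adj X)"
proof -
  obtain A where A: "\<And>c c'. c \<in> cfgs N d \<Longrightarrow> c' \<in> cfgs N d \<Longrightarrow>
     X c c' = (if agree_off N S c c' then A (restrict_cfg S c) (restrict_cfg S c') else 0)"
    using supported_onE[OF assms] by blast
  show ?thesis
    unfolding supported_on_iff
    by (rule exI[of _ "\<lambda>s s'. cnj (A s' s)"]) (auto simp: op_adj_def A agree_off_sym)
qed

lemma op_mul_disjoint_supports: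
  assumes "S \<inter> T = {}" "a \<in> cfgs N d" "b \<in> cfgs N d"
    and X: "\<And>c c'. c \<in> cfgs N d \<Longrightarrow> c' \<in> cfgs N d \<Longrightarrow>
      X c c' = (if agree_off N S c c' then A (restrict_cfg S c) (restrict_cfg S c') else 0)"
    and Y: "\<And>c c'. c \<in> cfgs N d \<Longrightarrow> c' \<in> cfgs N d \<Longrightarrow>
      Y c c' = (if agree_off N T c c' then B (restrict_cfg T c) (restrict_cfg T c') else 0)"
  shows "op_mul N d X Y a b = (if agree_off N (S \<union> T) a b
    then A (restrict_cfg S a) (restrict_cfg S b) * B (restrict_cfg T a) (restrict_cfg T b) else 0)"
proof -
  have nonzero: "e = merge_cfg S b a \<and> agree_off N (S \<union> T) a b"
    if "e \<in> cfgs N d" "X a e * Y e b \<noteq> 0" for e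
  proof -
    have "agree_off N S a e" "agree_off N T e b"
      using that X[OF assms(2) that(1)] Y[OF that(1) assms(3)] by (auto split: if_splits)
    moreover have "e i = merge_cfg S b a i" for i
    proof (cases "i < N")
      case True
      then show ?thesis
        using \<open>agree_off N S a e\<close> \<open>agree_off N T e b\<close> assms(1)
        unfolding agree_off_def merge_cfg_def by auto
    next
      case False
      then show ?thesis
        using that(1) assms(2,3) unfolding cfgs_def merge_cfg_def by auto
    qed
    ultimately show ?thesis
      unfolding agree_off_def by auto
  qed
  show ?thesis
  proof (cases "agree_off N (S \<union> T) a b")
    case False
    then have "op_mul N d X Y a b = 0"
      unfolding op_mul_def using nonzero by (intro sum.neutral) blast
    then show ?thesis
      using False by simp
  next
    case True
    define e where "e = merge_cfg S b a"
    have e: "e \<in> cfgs N d"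
      using assms(2,3) unfolding e_def cfgs_def merge_cfg_def by auto
    have "op_mul N d X Y a b = X a e * Y e b"
      unfolding op_mul_def using nonzero e_def by (intro sum_eq_single[OF finite_cfgs e]) blast
    moreover have "agree_off N S a e" "agree_off N T e b"
      "restrict_cfg S e = restrict_cfg S b" "restrict_cfg T e = restrict_cfg T a"
      using True assms(1) unfolding agree_off_def e_def merge_cfg_def restrict_cfg_def
      by (auto intro!: ext)
    ultimately show ?thesis
      using True by (simp add: X[OF assms(2) e] Y[OF e assms(3)])
  qed
qed

lemma op_mul_commute_disjoint:
  assumes "supported_on N d S X" "supported_on N d T Y" "S \<inter> T = {}"
  shows "op_eq N d (op_mul N d X Y) (op_mul N d Y X)"
proof -
  obtain A where A: "\<And>c c'. c \<in> cfgs N d \<Longrightarrow> c' \<in> cfgs N d \<Longrightarrow>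
     X c c' = (if agree_off N S c c' then A (restrict_cfg S c) (restrict_cfg S c') else 0)"
    using supported_onE[OF assms(1)] by blast
  obtain B where B: "\<And>c c'. c \<in> cfgs N d \<Longrightarrow> c' \<in> cfgs N d \<Longrightarrow>
     Y c c' = (if agree_off N T c c' then B (restrict_cfg T c) (restrict_cfg T c') else 0)"
    using supported_onE[OF assms(2)] by blast
  have "T \<inter> S = {}"
    using assms(3) by blast
  then show ?thesis
    unfolding op_eq_def
    using op_mul_disjoint_supports[OF assms(3) _ _ A B] op_mul_disjoint_supports[OF _ _ _ B A]
    by (simp add: Un_commute mult.commute)
qed

lemma op_conj_disjoint:
  assumes "supported_on N d S X" "supported_on N d T U" "S \<inter> T = {}" "op_unitary N d U"
  shows "op_eq N d (op_conj N d U X) X"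
proof -
  have "op_eq N d (op_conj N d U X) (op_mul N d (op_adj U) (op_mul N d U X))"
    unfolding op_conj_def by (rule op_mul_cong[OF op_eq_refl op_mul_commute_disjoint[OF assms(1-3)]])
  also have "op_eq N d \<dots> (op_mul N d op_id X)"
    unfolding op_mul_assoc[symmetric] using assms(4) unfolding op_unitary_def
    by (intro op_mul_cong op_eq_refl) auto
  also have "op_eq N d \<dots> X"
    by (rule op_mul_id_left)
  finally show ?thesis .
qed

lemma supported_on_conj:
  assumes "supported_on N d S X" "supported_on N d T U"
  shows "supported_on N d (S \<union> T) (op_conj N d U X)"
  unfolding op_conj_def
  using assms by (intro supported_on_mul supported_on_adj) (auto intro: supported_on_mono)

section \<open>Circuits and their light cones\<close>

definition conj_gates :: "nat \<Rightarrow> nat \<Rightarrow> op list \<Rightarrow> op \<Rightarrow> op" where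
  "conj_gates N d Us X = foldl (\<lambda>X U. op_conj N d U X) X Us"

definition conj_layers :: "nat \<Rightarrow> nat \<Rightarrow> (nat set \<times> op) list list \<Rightarrow> op \<Rightarrow> op" where
  "conj_layers N d ls X = foldl (\<lambda>X lay. conj_gates N d (map snd lay) X) X ls"

lemma conj_gates_simps [simp]:
  "conj_gates N d [] X = X"
  "conj_gates N d (U # Us) X = conj_gates N d Us (op_conj N d U X)"
  unfolding conj_gates_def by simp_all

lemma conj_layers_simps [simp]:
  "conj_layers N d [] X = X"
  "conj_layers N d (lay # ls) X = conj_layers N d ls (conj_gates N d (map snd lay) X)"
  unfolding conj_layers_def by simp_all

lemma conj_gates_cong: "op_eq N d X X' \<Longrightarrow> op_eq N d (conj_gates N d Us X) (conj_gates N d Us X')"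
  by (induction Us arbitrary: X X') (auto intro: op_conj_cong)

lemma conj_layers_cong: "op_eq N d X X' \<Longrightarrow> op_eq N d (conj_layers N d ls X) (conj_layers N d ls X')"
  by (induction ls arbitrary: X X') (auto intro: conj_gates_cong)

lemma op_conj_prod: "op_eq N d (op_conj N d (op_prod N d Us) X) (conj_gates N d Us X)"
proof (induction Us arbitrary: X)
  case Nil
  then show ?case by (simp add: op_prod_def op_conj_id)
next
  case (Cons U Us)
  then show ?case by (simp add: op_prod_def op_conj_mul)
qed

lemma op_conj_circuit_unitary:
  "op_eq N d (op_conj N d (circuit_unitary N d ls) X) (conj_layers N d ls X)"
proof (induction ls arbitrary: X)
  case Nil
  then show ?case by (simp add: circuit_unitary_def op_prod_def op_conj_id)
next
  case (Cons lay ls)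
  have "circuit_unitary N d (lay # ls) = op_mul N d (op_prod N d (map snd lay)) (circuit_unitary N d ls)"
    by (simp add: circuit_unitary_def op_prod_def)
  then have "op_eq N d (op_conj N d (circuit_unitary N d (lay # ls)) X)
      (op_conj N d (circuit_unitary N d ls) (op_conj N d (op_prod N d (map snd lay)) X))"
    by (simp add: op_conj_mul op_eq_refl)
  also have "op_eq N d \<dots> (op_conj N d (circuit_unitary N d ls) (conj_gates N d (map snd lay) X))"
    by (intro op_conj_cong op_conj_prod)
  also have "op_eq N d \<dots> (conj_layers N d ls (conj_gates N d (map snd lay) X))"
    by (rule Cons.IH)
  finally show ?case by simp
qed

definition is_gate :: "nat \<Rightarrow> nat \<Rightarrow> nat set \<times> op \<Rightarrow> bool" where
  "is_gate N d g \<longleftrightarrow> op_unitary N d (snd g) \<and> supported_on N d (fst g) (snd g)"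

definition gate_layer :: "nat \<Rightarrow> nat \<Rightarrow> (nat set \<times> op) list \<Rightarrow> bool" where
  "gate_layer N d lay \<longleftrightarrow> (\<forall>g\<in>set lay. is_gate N d g) \<and> sorted_wrt (\<lambda>g h. fst g \<inter> fst h = {}) lay"

lemma valid_layer_gate_layer: "valid_layer L N d R lay \<Longrightarrow> gate_layer N d lay"
  unfolding valid_layer_def valid_gate_def gate_layer_def is_gate_def sorted_wrt_iff_nth_less
  by auto

lemma gate_layer_filter: "gate_layer N d lay \<Longrightarrow> gate_layer N d (filter P lay)"
  unfolding gate_layer_def by (simp add: sorted_wrt_filter)

lemma op_unitary_circuit_unitary:
  "\<forall>lay\<in>set ls. gate_layer N d lay \<Longrightarrow> op_unitary N d (circuit_unitary N d ls)"
  unfolding circuit_unitary_def gate_layer_def is_gate_def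
  by (fastforce intro!: op_unitary_prod)

lemma layer_light_cone:
  assumes "gate_layer N d lay" "supported_on N d S X" "S \<subseteq> F"
    "\<forall>g\<in>set lay. fst g \<inter> S \<noteq> {} \<longrightarrow> P g \<and> fst g \<subseteq> F"
  shows "op_eq N d (conj_gates N d (map snd lay) X) (conj_gates N d (map snd (filter P lay)) X)
    \<and> supported_on N d F (conj_gates N d (map snd lay) X)"
  using assms
proof (induction lay arbitrary: S X)
  case Nil
  then show ?case by (auto intro: op_eq_refl supported_on_mono)
next
  case (Cons g gs)
  have gs: "gate_layer N d gs" "\<forall>h\<in>set gs. fst g \<inter> fst h = {}" and g: "is_gate N d g"
    using Cons.prems(1) unfolding gate_layer_def by auto
  show ?case
  proof (cases "fst g \<inter> S = {}")
    case True
    have unchanged: "op_eq N d (op_conj N d (snd g) X) X"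
      using Cons.prems(2) g True unfolding is_gate_def
      by (intro op_conj_disjoint[where S = S and T = "fst g"]) auto
    then have "supported_on N d S (op_conj N d (snd g) X)"
      using Cons.prems(2) op_eq_sym supported_on_cong by blast
    then have "op_eq N d (conj_gates N d (map snd gs) (op_conj N d (snd g) X))
        (conj_gates N d (map snd (filter P gs)) (op_conj N d (snd g) X))
      \<and> supported_on N d F (conj_gates N d (map snd gs) (op_conj N d (snd g) X))"
      using Cons.IH[OF gs(1)] Cons.prems(3,4) by simp
    moreover have "op_eq N d (conj_gates N d (map snd (filter P gs)) (op_conj N d (snd g) X))
        (conj_gates N d (map snd (filter P gs)) X)"
      by (rule conj_gates_cong[OF unchanged])
    ultimately show ?thesis
      by (auto intro: op_eq_trans)
  next
    case False
    then have "P g" "fst g \<subseteq> F"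
      using Cons.prems(4) by auto
    have "supported_on N d (S \<union> fst g) (op_conj N d (snd g) X)"
      using Cons.prems(2) g unfolding is_gate_def by (simp add: supported_on_conj)
    moreover have "\<forall>h\<in>set gs. fst h \<inter> (S \<union> fst g) \<noteq> {} \<longrightarrow> P h \<and> fst h \<subseteq> F"
      using Cons.prems(4) gs(2) by auto
    ultimately show ?thesis
      using Cons.IH[OF gs(1)] Cons.prems(3) \<open>P g\<close> \<open>fst g \<subseteq> F\<close> by simp
  qed
qed

lemma circuit_light_cone:
  assumes "\<forall>lay\<in>set ls. gate_layer N d lay" "supported_on N d (F 0) X"
    "\<forall>j<length ls. F j \<subseteq> F (Suc j)"
    "\<forall>j<length ls. \<forall>lay\<in>set ls. \<forall>g\<in>set lay. fst g \<inter> F j \<noteq> {} \<longrightarrow> P g \<and> fst g \<subseteq> F (Suc j)"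
  shows "op_eq N d (conj_layers N d ls X) (conj_layers N d (map (filter P) ls) X)
    \<and> supported_on N d (F (length ls)) (conj_layers N d ls X)"
  using assms
proof (induction ls arbitrary: F X)
  case Nil
  then show ?case by (simp add: op_eq_refl)
next
  case (Cons lay ls)
  have first: "op_eq N d (conj_gates N d (map snd lay) X) (conj_gates N d (map snd (filter P lay)) X)
    \<and> supported_on N d (F (Suc 0)) (conj_gates N d (map snd lay) X)"
  proof (rule layer_light_cone[where S = "F 0"])
    show "\<forall>g\<in>set lay. fst g \<inter> F 0 \<noteq> {} \<longrightarrow> P g \<and> fst g \<subseteq> F (Suc 0)"
      using Cons.prems(4) by (metis length_Cons list.set_intros(1) zero_less_Suc)
  qed (use Cons.prems in auto)
  have "\<forall>lay\<in>set ls. gate_layer N d lay"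
    "supported_on N d ((F \<circ> Suc) 0) (conj_gates N d (map snd lay) X)"
    "\<forall>j<length ls. (F \<circ> Suc) j \<subseteq> (F \<circ> Suc) (Suc j)"
    using Cons.prems(1,3) first by auto
  moreover have "\<forall>j<length ls. \<forall>lay\<in>set ls. \<forall>g\<in>set lay.
      fst g \<inter> (F \<circ> Suc) j \<noteq> {} \<longrightarrow> P g \<and> fst g \<subseteq> (F \<circ> Suc) (Suc j)"
    using Cons.prems(4) by (metis Suc_less_eq comp_apply length_Cons list.set_intros(2))
  ultimately have "op_eq N d (conj_layers N d ls (conj_gates N d (map snd lay) X))
      (conj_layers N d (map (filter P) ls) (conj_gates N d (map snd lay) X))
    \<and> supported_on N d ((F \<circ> Suc) (length ls)) (conj_layers N d ls (conj_gates N d (map snd lay) X))"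
    by (rule Cons.IH)
  moreover have "op_eq N d (conj_layers N d (map (filter P) ls) (conj_gates N d (map snd lay) X))
      (conj_layers N d (map (filter P) ls) (conj_gates N d (map snd (filter P lay)) X))"
    using first conj_layers_cong by blast
  ultimately show ?case
    by (auto intro: op_eq_trans)
qed

section \<open>Matrix units, traces and projections\<close>

definition matrix_unit :: "nat \<Rightarrow> nat set \<Rightarrow> (nat \<Rightarrow> nat) \<Rightarrow> (nat \<Rightarrow> nat) \<Rightarrow> op" where
  "matrix_unit N S p q =
    (\<lambda>a b. if agree_off N S a b \<and> (\<forall>i\<in>S. a i = p i \<and> b i = q i) then 1 else 0)"

lemma supported_on_matrix_unit: "supported_on N d S (matrix_unit N S p q)"
  unfolding supported_on_iff matrix_unit_def restrict_cfg_def
  by (rule exI[of _ "\<lambda>s s'. if \<forall>i\<in>S. s i = p i \<and> s' i = q i then 1 else 0"]) simp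

lemma op_adj_matrix_unit: "op_adj (matrix_unit N S p p) = matrix_unit N S p p"
  unfolding matrix_unit_def op_adj_def by (intro ext) (simp add: agree_off_sym conj_commute)

lemma op_mul_matrix_unit_right:
  assumes "S \<subseteq> {..<N}" "p \<in> configs d S" "a \<in> cfgs N d" "b \<in> cfgs N d"
  shows "op_mul N d Y (matrix_unit N S p q) a b =
    (if \<forall>i\<in>S. b i = q i then Y a (merge_cfg S p b) else 0)"
proof (cases "\<forall>i\<in>S. b i = q i")
  case False
  then show ?thesis
    unfolding op_mul_def matrix_unit_def by (auto intro!: sum.neutral)
next
  case True
  have m: "merge_cfg S p b \<in> cfgs N d"
    by (rule merge_cfg_cfgs[OF assms(2,1,4)])
  have "e = merge_cfg S p b" if "e \<in> cfgs N d" "agree_off N S e b" "\<forall>i\<in>S. e i = p i" for e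
  proof
    fix i show "e i = merge_cfg S p b i"
      using that assms(1,4) unfolding agree_off_def merge_cfg_def cfgs_def
      by (cases "i < N") auto
  qed
  then have "op_mul N d Y (matrix_unit N S p q) a b = Y a (merge_cfg S p b) * matrix_unit N S p q (merge_cfg S p b) b"
    unfolding op_mul_def by (intro sum_eq_single[OF finite_cfgs m]) (auto simp: matrix_unit_def)
  also have "\<dots> = Y a (merge_cfg S p b)"
    using True unfolding matrix_unit_def agree_off_def merge_cfg_def by auto
  finally show ?thesis
    using True by simp
qed

lemma op_mul_matrix_unit_left:
  assumes "S \<subseteq> {..<N}" "q \<in> configs d S" "a \<in> cfgs N d" "b \<in> cfgs N d"
  shows "op_mul N d (matrix_unit N S p q) Y a b =
    (if \<forall>i\<in>S. a i = p i then Y (merge_cfg S q a) b else 0)"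
proof (cases "\<forall>i\<in>S. a i = p i")
  case False
  then show ?thesis
    unfolding op_mul_def matrix_unit_def by (auto intro!: sum.neutral)
next
  case True
  have m: "merge_cfg S q a \<in> cfgs N d"
    by (rule merge_cfg_cfgs[OF assms(2,1,3)])
  have "e = merge_cfg S q a" if "e \<in> cfgs N d" "agree_off N S a e" "\<forall>i\<in>S. e i = q i" for e
  proof
    fix i show "e i = merge_cfg S q a i"
      using that assms(1,3) unfolding agree_off_def merge_cfg_def cfgs_def
      by (cases "i < N") auto
  qed
  then have "op_mul N d (matrix_unit N S p q) Y a b = matrix_unit N S p q a (merge_cfg S q a) * Y (merge_cfg S q a) b"
    unfolding op_mul_def by (intro sum_eq_single[OF finite_cfgs m]) (auto simp: matrix_unit_def)
  also have "\<dots> = Y (merge_cfg S q a) b"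
    using True unfolding matrix_unit_def agree_off_def merge_cfg_def by auto
  finally show ?thesis
    using True by simp
qed

lemma matrix_unit_idem:
  assumes "S \<subseteq> {..<N}" "p \<in> configs d S"
  shows "op_eq N d (op_mul N d (matrix_unit N S p p) (matrix_unit N S p p)) (matrix_unit N S p p)"
  unfolding op_eq_def
proof (intro ballI)
  fix a b assume ab: "a \<in> cfgs N d" "b \<in> cfgs N d"
  show "op_mul N d (matrix_unit N S p p) (matrix_unit N S p p) a b = matrix_unit N S p p a b"
  proof (cases "\<forall>i\<in>S. b i = p i")
    case True
    then have "merge_cfg S p b = b"
      unfolding merge_cfg_def by auto
    then show ?thesis
      using True by (simp add: op_mul_matrix_unit_right[OF assms ab])
  next
    case False
    then show ?thesis
      unfolding op_mul_matrix_unit_right[OF assms ab] by (auto simp: matrix_unit_def)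
  qed
qed

lemma commutes_matrix_units_entry:
  assumes "S \<subseteq> {..<N}" "0 < d" "a \<in> cfgs N d" "b \<in> cfgs N d"
    "\<forall>p\<in>configs d S. \<forall>q\<in>configs d S.
      op_eq N d (op_mul N d Y (matrix_unit N S p q)) (op_mul N d (matrix_unit N S p q) Y)"
  shows "Y a b = (if \<forall>i\<in>S. a i = b i
    then Y (merge_cfg S (\<lambda>_. 0) a) (merge_cfg S (\<lambda>_. 0) b) else 0)"
proof -
  have commute: "(if \<forall>i\<in>S. b' i = q i then Y a' (merge_cfg S p b') else 0) =
      (if \<forall>i\<in>S. a' i = p i then Y (merge_cfg S q a') b' else 0)"
    if "a' \<in> cfgs N d" "b' \<in> cfgs N d" "p \<in> configs d S" "q \<in> configs d S" for a' b' p q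
  proof -
    have "op_mul N d Y (matrix_unit N S p q) a' b' = op_mul N d (matrix_unit N S p q) Y a' b'"
      using assms(5) that unfolding op_eq_def by blast
    then show ?thesis
      by (simp only: op_mul_matrix_unit_right[OF assms(1) that(3,1,2)]
        op_mul_matrix_unit_left[OF assms(1) that(4,1,2)])
  qed
  have r: "restrict_cfg S b \<in> configs d S"
    by (rule restrict_cfg_configs[OF assms(1,4)])
  show ?thesis
  proof (cases "\<forall>i\<in>S. a i = b i")
    case False
    have "\<not> (\<forall>i\<in>S. a i = restrict_cfg S b i)" "\<forall>i\<in>S. b i = restrict_cfg S b i"
      using False unfolding restrict_cfg_def by auto
    then show ?thesis
      using False commute[OF assms(3,4) r r] by (simp only: merge_restrict_cfg if_True if_False) simp
  next
    case True
    have z: "(\<lambda>_. 0) \<in> configs d S"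
      using assms(2) unfolding configs_def by auto
    have m: "merge_cfg S (\<lambda>_. 0) b \<in> cfgs N d"
      by (rule merge_cfg_cfgs[OF z assms(1,4)])
    have "\<forall>i\<in>S. merge_cfg S (\<lambda>_. 0) b i = 0" "merge_cfg S (restrict_cfg S b) (merge_cfg S (\<lambda>_. 0) b) = b"
      "\<forall>i\<in>S. a i = restrict_cfg S b i"
      using True unfolding merge_cfg_def restrict_cfg_def by auto
    then show ?thesis
      using True commute[OF assms(3) m r z] by simp
  qed
qed

lemma supported_on_commutant:
  assumes "S1 \<inter> S2 = {}" "S1 \<subseteq> {..<N}" "0 < d" "supported_on N d (S1 \<union> S2) Y"
    "\<forall>p\<in>configs d S1. \<forall>q\<in>configs d S1.
      op_eq N d (op_mul N d Y (matrix_unit N S1 p q)) (op_mul N d (matrix_unit N S1 p q) Y)"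
  shows "supported_on N d S2 Y"
proof -
  define z :: "nat \<Rightarrow> nat" where "z = (\<lambda>_. 0)"
  note entry = commutes_matrix_units_entry[OF assms(2,3) _ _ assms(5), folded z_def]
  have z: "z \<in> configs d S1"
    using assms(3) unfolding z_def configs_def by auto
  obtain A where A: "\<And>c c'. c \<in> cfgs N d \<Longrightarrow> c' \<in> cfgs N d \<Longrightarrow> Y c c' = (if agree_off N (S1 \<union> S2) c c'
      then A (restrict_cfg (S1 \<union> S2) c) (restrict_cfg (S1 \<union> S2) c') else 0)"
    using supported_onE[OF assms(4)] by blast
  have "Y a b = (if agree_off N S2 a b then Y (restrict_cfg S2 a) (restrict_cfg S2 b) else 0)"
    if ab: "a \<in> cfgs N d" "b \<in> cfgs N d" for a b
  proof (cases "agree_off N S2 a b")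
    case False
    then obtain i where i: "i < N" "i \<notin> S2" "a i \<noteq> b i"
      unfolding agree_off_def by auto
    show ?thesis
    proof (cases "i \<in> S1")
      case True
      then show ?thesis
        using entry[OF ab] i False by auto
    next
      case False
      then have "\<not> agree_off N (S1 \<union> S2) a b"
        using i unfolding agree_off_def by auto
      then show ?thesis
        using A[OF ab] \<open>\<not> agree_off N S2 a b\<close> by simp
    qed
  next
    case True
    have m: "merge_cfg S1 z a \<in> cfgs N d" "merge_cfg S1 z b \<in> cfgs N d"
      using merge_cfg_cfgs[OF z assms(2)] ab by auto
    have r: "restrict_cfg S2 a \<in> cfgs N d" "restrict_cfg S2 b \<in> cfgs N d"
      using ab unfolding restrict_cfg_def cfgs_def by auto
    have "agree_off N (S1 \<union> S2) (merge_cfg S1 z a) (merge_cfg S1 z b)"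
      "agree_off N (S1 \<union> S2) (restrict_cfg S2 a) (restrict_cfg S2 b)"
      using True unfolding agree_off_def merge_cfg_def restrict_cfg_def by auto
    moreover have "restrict_cfg (S1 \<union> S2) (merge_cfg S1 z a) = restrict_cfg (S1 \<union> S2) (restrict_cfg S2 a)"
      "restrict_cfg (S1 \<union> S2) (merge_cfg S1 z b) = restrict_cfg (S1 \<union> S2) (restrict_cfg S2 b)"
      using assms(1) unfolding restrict_cfg_def merge_cfg_def z_def by (auto intro!: ext)
    moreover have "\<forall>i\<in>S1. a i = b i"
      using True assms(1,2) unfolding agree_off_def by auto
    ultimately show ?thesis
      using True by (simp add: entry[OF ab] A[OF m] A[OF r])
  qed
  then show ?thesis
    unfolding supported_on_iff by blast
qed

definition op_trace :: "nat \<Rightarrow> nat \<Rightarrow> op \<Rightarrow> complex" where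
  "op_trace N d X = (\<Sum>a\<in>cfgs N d. X a a)"

lemma op_trace_cong: "op_eq N d X X' \<Longrightarrow> op_trace N d X = op_trace N d X'"
  unfolding op_trace_def op_eq_def by simp

lemma op_trace_mul_commute: "op_trace N d (op_mul N d A B) = op_trace N d (op_mul N d B A)"
  unfolding op_trace_def op_mul_def by (subst sum.swap) (simp add: mult.commute)

lemma op_trace_conj:
  assumes "op_unitary N d U"
  shows "op_trace N d (op_conj N d U X) = op_trace N d X"
proof -
  have "op_trace N d (op_conj N d U X) = op_trace N d (op_mul N d X (op_mul N d U (op_adj U)))"
    unfolding op_conj_def op_trace_mul_commute[of N d "op_adj U"] by (simp add: op_mul_assoc)
  also have "\<dots> = op_trace N d (op_mul N d X op_id)"
    using assms unfolding op_unitary_def by (intro op_trace_cong op_mul_cong op_eq_refl) auto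
  also have "\<dots> = op_trace N d X"
    by (intro op_trace_cong op_mul_id_right)
  finally show ?thesis .
qed

lemma op_trace_matrix_unit_zero:
  assumes "S \<subseteq> {..<N}" "0 < d"
  shows "op_trace N d (matrix_unit N S (\<lambda>_. 0) (\<lambda>_. 0)) = of_nat (d ^ (N - card S))"
proof -
  have "op_trace N d (matrix_unit N S (\<lambda>_. 0) (\<lambda>_. 0)) =
      (\<Sum>a\<in>cfgs N d. if \<forall>i\<in>S. a i = 0 then 1 else 0)"
    unfolding op_trace_def matrix_unit_def agree_off_def by simp
  also have "\<dots> = of_nat (card {a\<in>cfgs N d. \<forall>i\<in>S. a i = 0})"
    by (simp add: sum.inter_filter[symmetric] finite_cfgs)
  also have "{a\<in>cfgs N d. \<forall>i\<in>S. a i = 0} = configs d ({..<N} - S)"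
    using assms unfolding cfgs_def configs_def by (auto simp: not_less)
  also have "card (configs d ({..<N} - S)) = d ^ (N - card S)"
    using assms by (simp add: card_configs card_Diff_subset finite_subset)
  finally show ?thesis .
qed

lemma gram_diagonal:
  assumes "op_eq N d (op_mul N d (op_adj Y) Y) Y" "a \<in> cfgs N d"
  shows "Re (Y a a) = (\<Sum>e\<in>cfgs N d. (cmod (Y e a))\<^sup>2)"
proof -
  have "Y a a = (\<Sum>e\<in>cfgs N d. cnj (Y e a) * Y e a)"
    using assms unfolding op_eq_def op_mul_def op_adj_def by simp
  then show ?thesis
    by (simp add: cmod_power2 flip: power2_eq_square)
qed

lemma gram_cauchy_schwarz:
  assumes "op_eq N d (op_mul N d (op_adj Y) Y) Y" "a \<in> cfgs N d" "b \<in> cfgs N d"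
  shows "(cmod (Y a b))\<^sup>2 \<le> Re (Y a a) * Re (Y b b)"
proof -
  have "Y a b = (\<Sum>e\<in>cfgs N d. cnj (Y e a) * Y e b)"
    using assms unfolding op_eq_def op_mul_def op_adj_def by simp
  then have "cmod (Y a b) \<le> (\<Sum>e\<in>cfgs N d. cmod (cnj (Y e a) * Y e b))"
    by (simp only: norm_sum)
  also have "\<dots> = (\<Sum>e\<in>cfgs N d. \<bar>cmod (Y e a)\<bar> * \<bar>cmod (Y e b)\<bar>)"
    by (simp add: norm_mult)
  also have "\<dots> \<le> L2_set (\<lambda>e. cmod (Y e a)) (cfgs N d) * L2_set (\<lambda>e. cmod (Y e b)) (cfgs N d)"
    by (rule L2_set_mult_ineq)
  also have "\<dots> = sqrt (Re (Y a a)) * sqrt (Re (Y b b))"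
    unfolding L2_set_def gram_diagonal[OF assms(1,2)] gram_diagonal[OF assms(1,3)] ..
  finally have "cmod (Y a b) \<le> sqrt (Re (Y a a)) * sqrt (Re (Y b b))" .
  moreover have "0 \<le> Re (Y a a)" "0 \<le> Re (Y b b)"
    using assms by (simp_all add: gram_diagonal sum_nonneg)
  ultimately have "(cmod (Y a b))\<^sup>2 \<le> (sqrt (Re (Y a a)) * sqrt (Re (Y b b)))\<^sup>2"
    by (intro power_mono) auto
  also have "\<dots> = Re (Y a a) * Re (Y b b)"
    using \<open>0 \<le> Re (Y a a)\<close> \<open>0 \<le> Re (Y b b)\<close> by (simp add: power_mult_distrib)
  finally show ?thesis .
qed

text \<open>A projection supported on \<open>S\<close> is \<open>P \<otimes> id\<close> with \<open>P\<close> a projection on \<open>S\<close>; if it is nonzero,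
  Cauchy-Schwarz on its Gram entries gives \<open>tr P \<ge> 1\<close>.\<close>

lemma projection_trace_ge:
  assumes "op_eq N d (op_mul N d (op_adj Y) Y) Y" "supported_on N d S Y" "S \<subseteq> {..<N}"
    "0 < Re (op_trace N d Y)"
  shows "real (d ^ (N - card S)) \<le> Re (op_trace N d Y)"
proof -
  obtain A where A: "\<And>c c'. c \<in> cfgs N d \<Longrightarrow> c' \<in> cfgs N d \<Longrightarrow>
     Y c c' = (if agree_off N S c c' then A (restrict_cfg S c) (restrict_cfg S c') else 0)"
    using supported_onE[OF assms(2)] by blast
  define \<sigma> where "\<sigma> = (\<Sum>s\<in>configs d S. Re (A s s))"
  have diag: "Re (Y (merge_cfg S s a) (merge_cfg S s a)) = Re (A s s)"
    if "s \<in> configs d S" "a \<in> cfgs N d" for s a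
    using that assms(3)
    by (simp add: A merge_cfg_cfgs restrict_merge_cfg agree_off_def)
  have "Re (op_trace N d Y) =
      (\<Sum>s\<in>configs d S. \<Sum>t\<in>configs d ({..<N} - S). Re (Y (merge_cfg S s t) (merge_cfg S s t)))"
    unfolding op_trace_def Re_sum by (rule sum_cfgs_split[OF assms(3)])
  also have "\<dots> = (\<Sum>s\<in>configs d S. \<Sum>t\<in>configs d ({..<N} - S). Re (A s s))"
    using assms(3)
    by (intro sum.cong refl diag) (auto simp: cfgs_eq_configs configs_def)
  also have "\<dots> = real (d ^ (N - card S)) * \<sigma>"
    using assms(3) by (simp add: \<sigma>_def sum_distrib_left card_configs card_Diff_subset finite_subset)
  finally have trace: "Re (op_trace N d Y) = real (d ^ (N - card S)) * \<sigma>" .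
  obtain j where j: "j \<in> cfgs N d" "0 < Re (Y j j)"
    using assms(4) unfolding op_trace_def Re_sum by (meson not_le sum_nonpos)
  have "Re (Y j j) = (\<Sum>e\<in>cfgs N d. if agree_off N S j e then (cmod (Y e j))\<^sup>2 else 0)"
    unfolding gram_diagonal[OF assms(1) j(1)]
    using j(1) by (intro sum.cong refl) (simp add: A agree_off_sym)
  also have "\<dots> \<le> (\<Sum>e\<in>cfgs N d. if agree_off N S j e then Re (Y e e) * Re (Y j j) else 0)"
    using gram_cauchy_schwarz[OF assms(1) _ j(1)] by (intro sum_mono) simp
  also have "\<dots> = (\<Sum>e\<in>cfgs N d. if agree_off N S j e then Re (Y e e) else 0) * Re (Y j j)"
    unfolding sum_distrib_right by (intro sum.cong) auto
  also have "(\<Sum>e\<in>cfgs N d. if agree_off N S j e then Re (Y e e) else 0) = \<sigma>"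
    unfolding sum_cfgs_agree_off[OF assms(3) j(1)] \<sigma>_def using j(1) by (intro sum.cong refl diag)
  finally have "1 \<le> \<sigma>"
    using j(2) by simp
  then show ?thesis
    unfolding trace by (simp add: mult_le_cancel_left1)
qed

text \<open>The counting behind the index of a QCA: the image of the projection commutes with the full
  matrix algebra on \<open>A\<close>, so it lives on \<open>B\<close>, and its trace is compared with the original one.\<close>

lemma conj_projection_card_le:
  assumes "2 \<le> d" "op_unitary N d V" "S \<subseteq> {..<N}" "S \<inter> W = {}"
    "A \<inter> B = {}" "A \<union> B \<subseteq> {..<N}"
    "supported_on N d (A \<union> B) (op_conj N d V (matrix_unit N S (\<lambda>_. 0) (\<lambda>_. 0)))"
    "\<forall>p\<in>configs d A. \<forall>q\<in>configs d A.
      \<exists>Z. supported_on N d W Z \<and> op_eq N d (op_conj N d V Z) (matrix_unit N A p q)"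
  shows "card S \<le> card B"
proof -
  define X where "X = matrix_unit N S (\<lambda>_. 0) (\<lambda>_. 0)"
  define Y where "Y = op_conj N d V X"
  have "op_eq N d (op_mul N d Y (matrix_unit N A p q)) (op_mul N d (matrix_unit N A p q) Y)"
    if pq: "p \<in> configs d A" "q \<in> configs d A" for p q
  proof -
    obtain Z where Z: "supported_on N d W Z" "op_eq N d (op_conj N d V Z) (matrix_unit N A p q)"
      using assms(8) pq by blast
    have "op_eq N d (op_mul N d Y (matrix_unit N A p q)) (op_mul N d Y (op_conj N d V Z))"
      by (rule op_mul_cong[OF op_eq_refl op_eq_sym[OF Z(2)]])
    also have "op_eq N d \<dots> (op_conj N d V (op_mul N d X Z))"
      unfolding Y_def by (rule op_conj_op_mul[OF assms(2)])
    also have "op_eq N d \<dots> (op_conj N d V (op_mul N d Z X))"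
      unfolding X_def
      by (intro op_conj_cong op_mul_commute_disjoint[OF supported_on_matrix_unit Z(1) assms(4)])
    also have "op_eq N d \<dots> (op_mul N d (op_conj N d V Z) Y)"
      unfolding Y_def by (rule op_eq_sym[OF op_conj_op_mul[OF assms(2)]])
    also have "op_eq N d \<dots> (op_mul N d (matrix_unit N A p q) Y)"
      by (rule op_mul_cong[OF Z(2) op_eq_refl])
    finally show ?thesis .
  qed
  then have supp: "supported_on N d B Y"
    using assms(1,6,7) unfolding Y_def X_def by (intro supported_on_commutant[OF assms(5)]) auto
  have "op_adj Y = Y"
    unfolding Y_def X_def op_adj_conj op_adj_matrix_unit ..
  then have "op_eq N d (op_mul N d (op_adj Y) Y) (op_conj N d V (op_mul N d X X))"
    unfolding Y_def by (simp add: op_conj_op_mul[OF assms(2)])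
  also have "op_eq N d \<dots> Y"
    unfolding Y_def X_def using assms(1,3)
    by (intro op_conj_cong matrix_unit_idem) (auto simp: configs_def)
  finally have proj: "op_eq N d (op_mul N d (op_adj Y) Y) Y" .
  have trace: "op_trace N d Y = of_nat (d ^ (N - card S))"
    using assms(1,3) unfolding Y_def X_def op_trace_conj[OF assms(2)]
    by (intro op_trace_matrix_unit_zero) auto
  have "real (d ^ (N - card B)) \<le> real (d ^ (N - card S))"
    using projection_trace_ge[OF proj supp] assms(1,6) trace by simp
  then have "N - card B \<le> N - card S"
    using assms(1) by (simp add: power_le_imp_le_exp)
  moreover have "card S \<le> N" "card B \<le> N"
    using assms(3,6) card_mono[of "{..<N}"] by auto
  ultimately show ?thesis
    by linarith
qed

lemma shift_site_image:
  assumes "lo \<le> hi" "hi < N"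
  shows "shift_site N ` ({..<N} - {lo..<hi}) = {..<N} - {Suc lo..<Suc hi}"
proof (intro set_eqI iffI)
  fix j assume j: "j \<in> {..<N} - {Suc lo..<Suc hi}"
  show "j \<in> shift_site N ` ({..<N} - {lo..<hi})"
  proof (cases j)
    case 0
    then have "j = shift_site N (N - 1)" "N - 1 \<in> {..<N} - {lo..<hi}"
      using assms unfolding shift_site_def by auto
    then show ?thesis by blast
  next
    case (Suc i)
    then have "j = shift_site N i" "i \<in> {..<N} - {lo..<hi}"
      using j unfolding shift_site_def by auto
    then show ?thesis by blast
  qed
next
  fix j assume "j \<in> shift_site N ` ({..<N} - {lo..<hi})"
  then obtain i where "i < N" "i \<notin> {lo..<hi}" "j = shift_site N i"
    by blast
  then show "j \<in> {..<N} - {Suc lo..<Suc hi}"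
    unfolding shift_site_def using assms by (cases "Suc i = N") auto
qed

lemma shift_qca_matrix_unit:
  assumes "lo \<le> hi" "hi < N"
  shows "op_eq N d (shift_qca N (matrix_unit N {lo..<hi} (p \<circ> Suc) (q \<circ> Suc)))
    (matrix_unit N {Suc lo..<Suc hi} p q)"
proof -
  have "agree_off N {lo..<hi} (a \<circ> shift_site N) (b \<circ> shift_site N) \<longleftrightarrow>
      agree_off N {Suc lo..<Suc hi} a b" for a b :: "nat \<Rightarrow> nat"
    unfolding agree_off_def shift_site_image[OF assms, symmetric] by simp
  moreover have "(\<forall>i\<in>{lo..<hi}. a (shift_site N i) = p (Suc i) \<and> b (shift_site N i) = q (Suc i)) \<longleftrightarrow>
      (\<forall>j\<in>{Suc lo..<Suc hi}. a j = p j \<and> b j = q j)" for a b :: "nat \<Rightarrow> nat"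
  proof -
    have "shift_site N i = Suc i" if "i \<in> {lo..<hi}" for i
      using that assms unfolding shift_site_def by auto
    moreover have "(\<forall>j\<in>{Suc lo..<Suc hi}. P j) \<longleftrightarrow> (\<forall>i\<in>{lo..<hi}. P (Suc i))" for P
      unfolding image_Suc_atLeastLessThan[symmetric] by blast
    ultimately show ?thesis
      by simp
  qed
  ultimately show ?thesis
    unfolding op_eq_def shift_qca_def matrix_unit_def by simp
qed

section \<open>Circuits of short gates on the ring\<close>

lemma ring_close_set_near_cut:
  assumes "T \<subseteq> {..<N}" "\<forall>i\<in>T. \<forall>j\<in>T. ring_dist N i j \<le> r"
    "i0 \<in> T" "j0 \<in> T" "r < nat_dist i0 j0" "k \<in> T"
  shows "k < 2 * r \<or> N - r \<le> k"
proof -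
  have "ring_dist N i0 j0 \<le> r" "ring_dist N j0 i0 \<le> r" "ring_dist N k i0 \<le> r" "ring_dist N k j0 \<le> r"
    "i0 < N" "j0 < N" "k < N"
    using assms by auto
  then show ?thesis
    using assms(5) unfolding ring_dist_def nat_dist_def min_le_iff_disj by (auto split: if_splits)
qed

locale ring_circuit =
  fixes N d r :: nat and ls :: "(nat set \<times> op) list list"
  assumes gate_layers: "\<forall>lay\<in>set ls. gate_layer N d lay"
    and gate_sites: "\<forall>lay\<in>set ls. \<forall>g\<in>set lay. fst g \<subseteq> {..<N}"
    and gate_ring_dist: "\<forall>lay\<in>set ls. \<forall>g\<in>set lay. \<forall>i\<in>fst g. \<forall>j\<in>fst g. ring_dist N i j \<le> r"
begin

definition unwrapped :: "nat set \<times> op \<Rightarrow> bool" where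
  "unwrapped g \<longleftrightarrow> (\<forall>i\<in>fst g. \<forall>j\<in>fst g. nat_dist i j \<le> r)"

text \<open>Dropping the gates that wrap around from site \<open>N - 1\<close> to site \<open>0\<close> cuts the ring open:
  the resulting circuit no longer moves anything across the cut.\<close>

definition cut_circuit :: op where
  "cut_circuit = circuit_unitary N d (map (filter unwrapped) ls)"

lemma wrapping_gate_near_cut:
  assumes "lay \<in> set ls" "g \<in> set lay" "\<not> unwrapped g" "k \<in> fst g"
  shows "k < 2 * r \<or> N - r \<le> k"
proof -
  obtain i0 j0 where "i0 \<in> fst g" "j0 \<in> fst g" "r < nat_dist i0 j0"
    using assms(3) unfolding unwrapped_def by (auto simp: not_le)
  then show ?thesis
    using assms gate_sites gate_ring_dist by (intro ring_close_set_near_cut[of "fst g" N r i0 j0]) auto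
qed

lemma op_unitary_cut_circuit: "op_unitary N d cut_circuit"
  unfolding cut_circuit_def using gate_layers
  by (auto intro!: op_unitary_circuit_unitary gate_layer_filter)

lemma cut_circuit_light_cone:
  assumes "supported_on N d {c..} X"
  shows "supported_on N d {c - length ls * r..} (op_conj N d cut_circuit X)"
proof -
  have "op_eq N d (conj_layers N d (map (filter unwrapped) ls) X)
      (conj_layers N d (map (filter (\<lambda>_. True)) (map (filter unwrapped) ls)) X)
    \<and> supported_on N d {c - length (map (filter unwrapped) ls) * r..}
      (conj_layers N d (map (filter unwrapped) ls) X)"
  proof (rule circuit_light_cone[where F = "\<lambda>j. {c - j * r..}"])
    show "\<forall>j<length (map (filter unwrapped) ls). \<forall>lay\<in>set (map (filter unwrapped) ls). \<forall>g\<in>set lay.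
        fst g \<inter> {c - j * r..} \<noteq> {} \<longrightarrow> True \<and> fst g \<subseteq> {c - Suc j * r..}"
      unfolding unwrapped_def nat_dist_le_iff by fastforce
  qed (use assms gate_layers gate_layer_filter in \<open>auto simp: diff_le_mono2\<close>)
  then show ?thesis
    unfolding cut_circuit_def using supported_on_cong op_eq_sym op_conj_circuit_unitary by fastforce
qed

lemma cut_circuit_agrees:
  assumes "(length ls + 2) * r \<le> a" "b + (length ls + 1) * r \<le> N" "supported_on N d {a..<b} Z"
  shows "op_eq N d (op_conj N d cut_circuit Z) (op_conj N d (circuit_unitary N d ls) Z)"
proof -
  define F where "F j = {a - j * r..<b + j * r}" for j
  have "unwrapped g \<and> fst g \<subseteq> F (Suc j)"
    if "j < length ls" "lay \<in> set ls" "g \<in> set lay" "i \<in> fst g" "i \<in> F j" for j lay g i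
  proof
    have "j * r \<le> length ls * r" "a - j * r \<le> i" "i < b + j * r"
      using that(1,5) unfolding F_def by auto
    then have "2 * r \<le> i" "i + r < N"
      using assms(1,2) unfolding add_mult_distrib by linarith+
    then show "unwrapped g"
      using wrapping_gate_near_cut[OF that(2,3) _ that(4)] by fastforce
    then show "fst g \<subseteq> F (Suc j)"
      using that(4,5) unfolding unwrapped_def nat_dist_le_iff F_def by fastforce
  qed
  then have "op_eq N d (conj_layers N d ls Z) (conj_layers N d (map (filter unwrapped) ls) Z)"
    using circuit_light_cone[of ls N d F Z unwrapped] gate_layers assms(3)
    unfolding F_def by (fastforce simp: diff_le_mono2)
  then show ?thesis
    unfolding cut_circuit_def
    by (meson op_conj_circuit_unitary op_eq_sym op_eq_trans)
qed

lemma cut_circuit_shifts_matrix_units: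
  assumes "\<forall>X. op_eq N d (shift_qca N X) (op_conj N d (circuit_unitary N d ls) X)"
    "(length ls + 2) * r \<le> a" "a \<le> b" "b + (length ls + 1) * r < N"
  shows "op_eq N d (op_conj N d cut_circuit (matrix_unit N {a..<b} (p \<circ> Suc) (q \<circ> Suc)))
    (matrix_unit N {Suc a..<Suc b} p q)"
proof -
  have "op_eq N d (op_conj N d cut_circuit (matrix_unit N {a..<b} (p \<circ> Suc) (q \<circ> Suc)))
      (op_conj N d (circuit_unitary N d ls) (matrix_unit N {a..<b} (p \<circ> Suc) (q \<circ> Suc)))"
    using assms(2,4) supported_on_matrix_unit by (intro cut_circuit_agrees[where b = b]) auto
  also have "op_eq N d \<dots> (shift_qca N (matrix_unit N {a..<b} (p \<circ> Suc) (q \<circ> Suc)))"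
    using assms(1) op_eq_sym by blast
  also have "op_eq N d \<dots> (matrix_unit N {Suc a..<Suc b} p q)"
    using assms(3,4) by (intro shift_qca_matrix_unit) auto
  finally show ?thesis .
qed

theorem shift_not_realized:
  assumes "2 \<le> d" "3 * length ls * r + 3 * r + 2 \<le> N"
  shows "\<not> (\<forall>X. op_eq N d (shift_qca N X) (op_conj N d (circuit_unitary N d ls) X))"
proof
  assume realizes: "\<forall>X. op_eq N d (shift_qca N X) (op_conj N d (circuit_unitary N d ls) X)"
  define w where "w = length ls * r"
  define c where "c = 2 * w + 2 * r + 1"
  have c: "c + w + r < N"
    using assms(2) unfolding c_def w_def by (simp add: mult.commute)
  have "card {c..<N} \<le> card {Suc c..<N}"
  proof (rule conj_projection_card_le[OF assms(1) op_unitary_cut_circuit, where W = "{w + 2 * r..<c}"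
        and A = "{c - w..<Suc c}"])
    have "supported_on N d {c..} (matrix_unit N {c..<N} (\<lambda>_. 0) (\<lambda>_. 0))"
      by (rule supported_on_mono[OF supported_on_matrix_unit]) auto
    then have "supported_on N d ({c - w..} \<inter> {..<N}) (op_conj N d cut_circuit (matrix_unit N {c..<N} (\<lambda>_. 0) (\<lambda>_. 0)))"
      unfolding supported_on_inter_lessThan w_def by (rule cut_circuit_light_cone)
    moreover have "{c - w..} \<inter> {..<N} = {c - w..<Suc c} \<union> {Suc c..<N}"
      using c by auto
    ultimately show "supported_on N d ({c - w..<Suc c} \<union> {Suc c..<N})
        (op_conj N d cut_circuit (matrix_unit N {c..<N} (\<lambda>_. 0) (\<lambda>_. 0)))"
      by simp
    have "{c - w..<Suc c} = {Suc (w + 2 * r)..<Suc c}"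
      unfolding c_def by auto
    show "\<forall>p\<in>configs d {c - w..<Suc c}. \<forall>q\<in>configs d {c - w..<Suc c}. \<exists>Z.
        supported_on N d {w + 2 * r..<c} Z \<and> op_eq N d (op_conj N d cut_circuit Z) (matrix_unit N {c - w..<Suc c} p q)"
    proof (intro ballI exI conjI)
      fix p q :: "nat \<Rightarrow> nat"
      show "op_eq N d (op_conj N d cut_circuit (matrix_unit N {w + 2 * r..<c} (p \<circ> Suc) (q \<circ> Suc)))
          (matrix_unit N {c - w..<Suc c} p q)"
        unfolding \<open>{c - w..<Suc c} = {Suc (w + 2 * r)..<Suc c}\<close> using c
        by (intro cut_circuit_shifts_matrix_units[OF realizes]) (auto simp: w_def c_def algebra_simps)
    qed (rule supported_on_matrix_unit)
  qed (use c in auto)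
  then show False
    using c by simp
qed

end

section \<open>Large projective spaces\<close>

lemma fdqc_realizes_ring_circuit:
  assumes "fdqc_realizes L N d D R \<alpha>" "0 < L"
  obtains ls where "length ls \<le> D" "ring_circuit N d (nat \<lceil>R * real N / (pi * L)\<rceil>) ls"
    "\<forall>X. op_eq N d (\<alpha> X) (op_conj N d (circuit_unitary N d ls) X)"
proof -
  obtain ls where ls: "length ls \<le> D" "\<forall>lay\<in>set ls. valid_layer L N d R lay"
    "\<forall>X. op_eq N d (\<alpha> X) (op_conj N d (circuit_unitary N d ls) X)"
    using assms(1) unfolding fdqc_realizes_def op_conj_def by blast
  have "ring_circuit N d (nat \<lceil>R * real N / (pi * L)\<rceil>) ls"
  proof
    show "\<forall>lay\<in>set ls. gate_layer N d lay"
      using ls(2) valid_layer_gate_layer by blast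
    show "\<forall>lay\<in>set ls. \<forall>g\<in>set lay. fst g \<subseteq> {..<N}"
      using ls(2) unfolding valid_layer_def valid_gate_def by blast
    show "\<forall>lay\<in>set ls. \<forall>g\<in>set lay. \<forall>i\<in>fst g. \<forall>j\<in>fst g. ring_dist N i j \<le> nat \<lceil>R * real N / (pi * L)\<rceil>"
    proof (intro ballI)
      fix lay g i j assume "lay \<in> set ls" "g \<in> set lay" "i \<in> fst g" "j \<in> fst g"
      then have "real (ring_dist N i j) \<le> real (nat \<lceil>R * real N / (pi * L)\<rceil>)"
        using ls(2) valid_gate_ring_dist[OF _ assms(2)] real_nat_ceiling_ge
        unfolding valid_layer_def by (meson order_trans)
      then show "ring_dist N i j \<le> nat \<lceil>R * real N / (pi * L)\<rceil>"
        by simp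
    qed
  qed
  then show ?thesis
    using ls that by blast
qed

lemma fdqc_not_realizes_shift:
  assumes "2 \<le> d" "0 < L" "(3 * D + 3) * nat \<lceil>R * real N / (pi * L)\<rceil> + 2 \<le> N"
  shows "\<not> fdqc_realizes L N d D R (shift_qca N)"
proof
  assume "fdqc_realizes L N d D R (shift_qca N)"
  then obtain ls where ls: "length ls \<le> D" "ring_circuit N d (nat \<lceil>R * real N / (pi * L)\<rceil>) ls"
    "\<forall>X. op_eq N d (shift_qca N X) (op_conj N d (circuit_unitary N d ls) X)"
    using assms(2) by (rule fdqc_realizes_ring_circuit)
  have "3 * length ls * nat \<lceil>R * real N / (pi * L)\<rceil> \<le> 3 * D * nat \<lceil>R * real N / (pi * L)\<rceil>"
    using ls(1) by simp
  then have "3 * length ls * nat \<lceil>R * real N / (pi * L)\<rceil> + 3 * nat \<lceil>R * real N / (pi * L)\<rceil> + 2 \<le> N"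
    using assms(3) unfolding add_mult_distrib by linarith
  then show False
    using ring_circuit.shift_not_realized[OF ls(2) assms(1)] ls(3) by blast
qed

lemma ring_radius_small:
  fixes L R C :: real and N K :: nat
  assumes "0 < N" "pi * L / real N \<le> C" "max 1 (max (2 * K * max R 0 / pi) ((2 * K + 4) * C / pi)) \<le> L"
  shows "K * nat \<lceil>R * real N / (pi * L)\<rceil> + 2 \<le> N"
proof -
  have L: "0 < L" "2 * K * max R 0 \<le> pi * L" "(2 * K + 4) * C \<le> pi * L"
    using assms(3) by (auto simp: divide_le_eq mult.commute)
  have N: "0 < real N" "pi * L \<le> C * real N"
    using assms(1,2) by (auto simp: divide_le_eq)
  have "0 < C * real N"
    using mult_pos_pos[OF pi_gt_zero L(1)] N(2) by linarith
  then have "0 < C"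
    using N(1) by (rule zero_less_mult_pos2)
  moreover have "C * (2 * K + 4) \<le> C * real N"
    using L(3) N(2) by (simp add: mult.commute)
  ultimately have sites: "2 * K + 4 \<le> real N"
    by simp
  define y where "y = max R 0 * real N / (pi * L)"
  have "0 \<le> y" "R * real N / (pi * L) \<le> y"
    using L(1) N(1) unfolding y_def by (auto intro!: divide_right_mono mult_right_mono)
  then have "nat \<lceil>R * real N / (pi * L)\<rceil> \<le> nat \<lceil>y\<rceil>"
    by (intro nat_mono ceiling_mono) simp
  then have "real (nat \<lceil>R * real N / (pi * L)\<rceil>) \<le> real (nat \<lceil>y\<rceil>)"
    by (simp only: of_nat_le_iff)
  also have "\<dots> = real_of_int \<lceil>y\<rceil>"
    using \<open>0 \<le> y\<close> by simp
  also have "\<dots> \<le> y + 1"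
    using ceiling_correct[of y] by linarith
  finally have radius: "real (nat \<lceil>R * real N / (pi * L)\<rceil>) \<le> y + 1" .
  have "K * y = (2 * K * max R 0) * real N / (2 * (pi * L))"
    unfolding y_def by simp
  also have "\<dots> \<le> (pi * L) * real N / (2 * (pi * L))"
    using L(1,2) N(1) by (intro divide_right_mono mult_right_mono) auto
  also have "\<dots> = real N / 2"
    using L(1) by simp
  finally have "K * y \<le> real N / 2" .
  then have "real K * real (nat \<lceil>R * real N / (pi * L)\<rceil>) + 2 \<le> real N"
    using radius sites mult_left_mono[OF radius, of "real K"] by (simp add: distrib_left)
  then show ?thesis
    by (simp flip: of_nat_mult of_nat_add)
qed

lemma eventually_ring_radius_small:
  fixes L :: "nat \<Rightarrow> real" and N :: "nat \<Rightarrow> nat" and K :: nat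
  assumes "filterlim L at_top sequentially" "\<forall>n. 0 < N n" "\<forall>n. pi * L n / real (N n) \<le> C"
  shows "\<forall>\<^sub>F n in sequentially. 0 < L n \<and> K * nat \<lceil>R * real (N n) / (pi * L n)\<rceil> + 2 \<le> N n"
proof -
  have "\<forall>\<^sub>F n in sequentially. max 1 (max (2 * K * max R 0 / pi) ((2 * K + 4) * C / pi)) \<le> L n"
    using assms(1) unfolding filterlim_at_top by blast
  then show ?thesis
  proof (rule eventually_mono)
    fix n assume "max 1 (max (2 * K * max R 0 / pi) ((2 * K + 4) * C / pi)) \<le> L n"
    then show "0 < L n \<and> K * nat \<lceil>R * real (N n) / (pi * L n)\<rceil> + 2 \<le> N n"
      using assms(2,3) ring_radius_small[of "N n" "L n" C K R] by auto
  qed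
qed

theorem mainTheorem16:
  fixes d :: nat and L :: "nat \<Rightarrow> real" and N :: "nat \<Rightarrow> nat"
  assumes "d \<ge> 2"
    and "filterlim L at_top sequentially"
    and "\<And>n. N n \<ge> 2"
    and "\<exists>C. \<forall>n. pi * L n / real (N n) \<le> C"
  shows "\<not> (\<exists>D R. \<forall>n. fdqc_realizes (L n) (N n) d D R (shift_qca (N n)))"
proof
  assume "\<exists>D R. \<forall>n. fdqc_realizes (L n) (N n) d D R (shift_qca (N n))"
  then obtain D R where realizes: "\<And>n. fdqc_realizes (L n) (N n) d D R (shift_qca (N n))"
    by blast
  obtain C where "\<forall>n. pi * L n / real (N n) \<le> C"
    using assms(4) by blast
  moreover have "\<forall>n. 0 < N n"
    using assms(3) by (metis less_le_trans zero_less_numeral)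
  ultimately have "\<forall>\<^sub>F n in sequentially.
      0 < L n \<and> (3 * D + 3) * nat \<lceil>R * real (N n) / (pi * L n)\<rceil> + 2 \<le> N n"
    by (intro eventually_ring_radius_small[OF assms(2)])
  then obtain n where "0 < L n" "(3 * D + 3) * nat \<lceil>R * real (N n) / (pi * L n)\<rceil> + 2 \<le> N n"
    by (auto simp: eventually_sequentially)
  then show False
    using fdqc_not_realizes_shift[OF assms(1)] realizes by blast
qed

end
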